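(* Let $e_1,\dots,e_N$ be $N$ entities, each entity $e$ having a utility $U(e)\ge 0$, a perceived relevance (click probability given view) $C(e)\in[0,1]$ and an abandonment probability $\gamma(e)\ge 0$ with $0< C(e)+\gamma(e)\le 1$. For a ranking (ordering) $\langle e_{1},\dots,e_{N}\rangle$ of the entities, define its expected utility $$E(U)=\sum_{i=1}^{N}U(e_i)\,C(e_i)\prod_{j=1}^{i-1}\Big[1-\big(C(e_j)+\gamma(e_j)\big)\Big].$$ Then $E(U)$ is maximized (over all orderings) by placing the entities in descending order of $$CE(e)=\frac{U(e)\,C(e)}{C(e)+\gamma(e)}.$$
   Context: Click model: the user browses the ranked list from top to bottom; having viewed the entity at position $i$, the user clicks it with probability $C(e_i)$, abandons browsing with probability $\gamma(e_i)$, and otherwise proceeds to the next entity. Hence the click probability of the entity at position $i$ is $C(e_i)\prod_{j<i}[1-(C(e_j)+\gamma(e_j))]$, and $E(U)$ is the expected total utility of clicked entities. *)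

theory Defs
  imports Main "HOL.Real"
begin

definition expected_utility ::
  "('a \<Rightarrow> real) \<Rightarrow> ('a \<Rightarrow> real) \<Rightarrow> ('a \<Rightarrow> real) \<Rightarrow> 'a list \<Rightarrow> real" where
  "expected_utility U C \<gamma> xs =
     (\<Sum>i<length xs. U (xs ! i) * C (xs ! i) *
        (\<Prod>j<i. 1 - (C (xs ! j) + \<gamma> (xs ! j))))"

definition CE :: "('a \<Rightarrow> real) \<Rightarrow> ('a \<Rightarrow> real) \<Rightarrow> ('a \<Rightarrow> real) \<Rightarrow> 'a \<Rightarrow> real" where
  "CE U C \<gamma> e = U e * C e / (C e + \<gamma> e)"

definition is_ranking :: "'a set \<Rightarrow> 'a list \<Rightarrow> bool" where
  "is_ranking E xs \<longleftrightarrow> distinct xs \<and> set xs = E"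

end

theory Submission
  imports Defs
begin

text \<open>Unfolding one position shows that a ranking behaves like a weighted stack:
  \<open>E(x # w) = U x C x + (1 - (C x + \<gamma> x)) E(w)\<close>. Hence exchanging two adjacent entities
  \<open>y, x\<close> in front of a common tail \<open>w\<close> changes \<open>E\<close> by
  \<open>(C x + \<gamma> x) U y C y - (C y + \<gamma> y) U x C x\<close>, whose sign is that of
  \<open>CE y - CE x\<close>. Moving the entity of largest \<open>CE\<close> to the front by such exchanges never
  decreases \<open>E\<close>, since the factors \<open>1 - (C + \<gamma>)\<close> in front are nonnegative; induction on
  the sorted ranking finishes the argument.\<close>

lemma expected_utility_Nil [simp]: "expected_utility U C g [] = 0"
  by (simp add: expected_utility_def)

lemma expected_utility_Cons [simp]:
  "expected_utility U C g (x # xs) = U x * C x + (1 - (C x + g x)) * expected_utility U C g xs"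
proof -
  have "expected_utility U C g (x # xs) =
     U x * C x + (\<Sum>i<length xs. U (xs ! i) * C (xs ! i) *
        ((1 - (C x + g x)) * (\<Prod>j<i. 1 - (C (xs ! j) + g (xs ! j)))))"
    unfolding expected_utility_def
    by (simp only: length_Cons sum.lessThan_Suc_shift prod.lessThan_Suc_shift) simp
  also have "\<dots> = U x * C x + (1 - (C x + g x)) * expected_utility U C g xs"
    unfolding expected_utility_def sum_distrib_left by (simp add: algebra_simps)
  finally show ?thesis .
qed

lemma expected_utility_swap_le:
  assumes "0 < C x + g x" "0 < C y + g y" and "CE U C g y \<le> CE U C g x"
  shows "expected_utility U C g (y # x # w) \<le> expected_utility U C g (x # y # w)"
proof -
  have "(C x + g x) * (U y * C y) \<le> (C y + g y) * (U x * C x)"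
    using assms by (simp add: CE_def divide_simps mult.commute)
  then show ?thesis by (simp add: algebra_simps)
qed

lemma expected_utility_move_to_front:
  assumes "\<forall>e\<in>set (x # ys). 0 < C e + g e \<and> C e + g e \<le> 1"
    and "\<forall>y\<in>set ys. CE U C g y \<le> CE U C g x"
  shows "expected_utility U C g (ys @ x # zs) \<le> expected_utility U C g (x # ys @ zs)"
  using assms
proof (induction ys)
  case Nil
  then show ?case by simp
next
  case (Cons y ys)
  then have "0 \<le> 1 - (C y + g y)" by simp
  with Cons have "expected_utility U C g ((y # ys) @ x # zs)
      \<le> expected_utility U C g (y # x # ys @ zs)"
    by (simp add: mult_left_mono)
  also have "\<dots> \<le> expected_utility U C g (x # y # ys @ zs)"
    using Cons.prems by (intro expected_utility_swap_le) auto
  finally show ?case by simp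
qed

lemma expected_utility_le_sorted:
  assumes "\<forall>e\<in>set xs. 0 < C e + g e \<and> C e + g e \<le> 1"
    and "distinct xs" "sorted_wrt (\<lambda>a b. CE U C g a \<ge> CE U C g b) xs"
    and "distinct ys" "set ys = set xs"
  shows "expected_utility U C g ys \<le> expected_utility U C g xs"
  using assms
proof (induction xs arbitrary: ys)
  case Nil
  then show ?case by simp
next
  case (Cons x xs)
  then obtain a b where ys: "ys = a @ x # b"
    by (metis list.set_intros(1) split_list)
  with Cons.prems have x_notin: "x \<notin> set a" "x \<notin> set b" by auto
  with Cons.prems ys have set_ab: "set (a @ b) = set xs" by auto
  have "expected_utility U C g ys \<le> expected_utility U C g (x # a @ b)"
    unfolding ys using Cons.prems set_ab by (intro expected_utility_move_to_front) auto
  also have "\<dots> \<le> expected_utility U C g (x # xs)"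
  proof -
    have "expected_utility U C g (a @ b) \<le> expected_utility U C g xs"
      using Cons set_ab ys by auto
    moreover have "0 \<le> 1 - (C x + g x)" using Cons.prems(1) by simp
    ultimately show ?thesis by (simp add: mult_left_mono)
  qed
  finally show ?case .
qed

theorem theorem1:
  fixes E :: "'a set" and U C \<gamma> :: "'a \<Rightarrow> real" and xs :: "'a list"
  assumes "finite E"
    and "\<And>e. e \<in> E \<Longrightarrow> U e \<ge> 0"
    and "\<And>e. e \<in> E \<Longrightarrow> 0 \<le> C e \<and> C e \<le> 1"
    and "\<And>e. e \<in> E \<Longrightarrow> \<gamma> e \<ge> 0"
    and "\<And>e. e \<in> E \<Longrightarrow> 0 < C e + \<gamma> e \<and> C e + \<gamma> e \<le> 1"
    and "is_ranking E xs"
    and "sorted_wrt (\<lambda>a b. CE U C \<gamma> a \<ge> CE U C \<gamma> b) xs"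
  shows "\<forall>ys. is_ranking E ys \<longrightarrow> expected_utility U C \<gamma> ys \<le> expected_utility U C \<gamma> xs"
proof (intro allI impI)
  fix ys assume "is_ranking E ys"
  with assms(5-7) show "expected_utility U C \<gamma> ys \<le> expected_utility U C \<gamma> xs"
    by (intro expected_utility_le_sorted) (auto simp: is_ranking_def)
qed

end
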